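(* Let $p$ be an odd prime, $R=F_p+vF_p$ with $v^2=v$, let $\vartheta=1-2v$ or $\vartheta=-1+2v$, and let $C$ be a $\vartheta$-constacyclic code of length $n$ over $R$ with generating set in standard form $\{vg_{1-v}(x),(1-v)g_v(x)\}$. Then: (1) $\phi_\vartheta(C^\perp)=[h_{1-v}^*(x)h_v^*(x)]$; (2) $\phi_\vartheta(C^\perp)=(\phi_\vartheta(C))^\perp$.
   Context: Write $\vartheta=\lambda+v\mu$ with $\lambda,\mu\in F_p$. A $\vartheta$-constacyclic code of length $n$ over $R$ is an $R$-submodule of $R^n$ closed under $(c_0,\dots,c_{n-1})\mapsto(\vartheta c_{n-1},c_0,\dots,c_{n-2})$, identified with an ideal of $R[x]/\langle x^n-\vartheta\rangle$ via $(c_i)\mapsto\sum c_ix^i$. Duals are with respect to the standard Euclidean inner product (on $R^n$ and on $F_p^{2n}$). A set $\{vg_1(x),(1-v)g_2(x)\}$ is a generating set in standard form for $C$ if it generates $C$ as an ideal, each $g_i\in F_p[x]$ is monic or $0$, $g_1\mid x^n-(\lambda+\mu)$ if $g_1\ne0$, and $g_2\mid x^n-\lambda$ if $g_2\ne0$. Let $h_{1-v},h_v\in F_p[x]$ be given by $g_{1-v}h_{1-v}=x^n-(\lambda+\mu)$ and $g_vh_v=x^n-\lambda$; for $h\in\{h_{1-v},h_v\}$, $h^*(x)=\frac{1}{h(0)}x^{\deg h}h(1/x)$. The Gray map $\phi_\vartheta:R^n\to F_p^{2n}$ sends $(c_0,\dots,c_{n-1})$ with $c_i=r_i+vq_i$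 to $(\lambda(\lambda+\mu)q_0,\dots,\lambda(\lambda+\mu)q_{n-1},-\mu r_0-(\lambda+\mu)q_0,\dots,-\mu r_{n-1}-(\lambda+\mu)q_{n-1})$; equivalently, in polynomial form, $r(x)+vq(x)\mapsto\lambda(\lambda+\mu)q(x)+x^n[-\mu r(x)-(\lambda+\mu)q(x)]\in F_p[x]/\langle x^{2n}-1\rangle$. For a monic divisor $g$ of $x^{2n}-1$, $[g(x)]$ denotes the cyclic code (ideal of $F_p[x]/\langle x^{2n}-1\rangle$) generated by $g$. *)

theory Defs
  imports "HOL-Computational_Algebra.Computational_Algebra"
begin

text \<open>Elements of R = F_p + v F_p (v^2 = v) are represented as pairs (r, q)
  standing for r + v q, with r, q in the field 'a (a field with p elements).\<close>

definition Radd :: "'a::comm_ring_1 \<times> 'a \<Rightarrow> 'a \<times> 'a \<Rightarrow> 'a \<times> 'a" where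
  "Radd x y = (fst x + fst y, snd x + snd y)"

text \<open>(r + vq)(r' + vq') = rr' + v(rq' + qr' + qq') since v^2 = v.\<close>
definition Rmul :: "'a::comm_ring_1 \<times> 'a \<Rightarrow> 'a \<times> 'a \<Rightarrow> 'a \<times> 'a" where
  "Rmul x y = (fst x * fst y, fst x * snd y + snd x * fst y + snd x * snd y)"

fun Rpow :: "'a::comm_ring_1 \<times> 'a \<Rightarrow> nat \<Rightarrow> 'a \<times> 'a" where
  "Rpow t 0 = (1, 0)"
| "Rpow t (Suc k) = Rmul t (Rpow t k)"

definition Rwords :: "nat \<Rightarrow> (nat \<Rightarrow> 'a::comm_ring_1 \<times> 'a) set" where
  "Rwords n = {c. \<forall>i\<ge>n. c i = (0, 0)}"

definition cshift :: "'a::comm_ring_1 \<times> 'a \<Rightarrow> nat \<Rightarrow> (nat \<Rightarrow> 'a \<times> 'a) \<Rightarrow> (nat \<Rightarrow> 'a \<times> 'a)" where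
  "cshift t n c = (\<lambda>i. if i = 0 then Rmul t (c (n - 1)) else if i < n then c (i - 1) else (0, 0))"

definition is_constacyclic :: "'a::comm_ring_1 \<times> 'a \<Rightarrow> nat \<Rightarrow> (nat \<Rightarrow> 'a \<times> 'a) set \<Rightarrow> bool" where
  "is_constacyclic t n C \<longleftrightarrow>
     C \<subseteq> Rwords n \<and> (\<lambda>i. (0, 0)) \<in> C \<and>
     (\<forall>c\<in>C. \<forall>d\<in>C. (\<lambda>i. Radd (c i) (d i)) \<in> C) \<and>
     (\<forall>a. \<forall>c\<in>C. (\<lambda>i. Rmul a (c i)) \<in> C) \<and>
     (\<forall>c\<in>C. cshift t n c \<in> C)"

text \<open>The ideal of R[x]/<x^n - theta> generated by a set S of words
  (= smallest constacyclic code containing S).\<close>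
definition gen_code :: "'a::comm_ring_1 \<times> 'a \<Rightarrow> nat \<Rightarrow> (nat \<Rightarrow> 'a \<times> 'a) set \<Rightarrow> (nat \<Rightarrow> 'a \<times> 'a) set" where
  "gen_code t n S = \<Inter> {D. is_constacyclic t n D \<and> S \<subseteq> D}"

text \<open>The word (element of R[x]/<x^n - theta>) represented by the polynomial
  r(x) + v q(x) in R[x], using x^(kn+i) = theta^k x^i.\<close>
definition polyword :: "'a::comm_ring_1 \<times> 'a \<Rightarrow> nat \<Rightarrow> 'a poly \<times> 'a poly \<Rightarrow> (nat \<Rightarrow> 'a \<times> 'a)" where
  "polyword t n f = (\<lambda>i. if i < n then
      ((\<Sum>k\<le>degree (fst f) + degree (snd f).
          fst (Rmul (Rpow t k) (coeff (fst f) (k * n + i), coeff (snd f) (k * n + i)))),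
       (\<Sum>k\<le>degree (fst f) + degree (snd f).
          snd (Rmul (Rpow t k) (coeff (fst f) (k * n + i), coeff (snd f) (k * n + i)))))
    else (0, 0))"

definition Rdual :: "nat \<Rightarrow> (nat \<Rightarrow> 'a::comm_ring_1 \<times> 'a) set \<Rightarrow> (nat \<Rightarrow> 'a \<times> 'a) set" where
  "Rdual n C = {d \<in> Rwords n. \<forall>c\<in>C.
      ((\<Sum>i<n. fst (Rmul (c i) (d i))), (\<Sum>i<n. snd (Rmul (c i) (d i)))) = (0, 0)}"

definition Fwords :: "nat \<Rightarrow> (nat \<Rightarrow> 'a::zero) set" where
  "Fwords m = {c. \<forall>i\<ge>m. c i = 0}"

definition Fdual :: "nat \<Rightarrow> (nat \<Rightarrow> 'a::comm_ring_1) set \<Rightarrow> (nat \<Rightarrow> 'a) set" where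
  "Fdual m D = {d \<in> Fwords m. \<forall>c\<in>D. (\<Sum>i<m. c i * d i) = 0}"

text \<open>Gray map phi_theta for theta = lam + v mu.\<close>
definition gray :: "'a::comm_ring_1 \<Rightarrow> 'a \<Rightarrow> nat \<Rightarrow> (nat \<Rightarrow> 'a \<times> 'a) \<Rightarrow> (nat \<Rightarrow> 'a)" where
  "gray lam mu n c = (\<lambda>i.
     if i < n then lam * (lam + mu) * snd (c i)
     else if i < 2 * n then - mu * fst (c (i - n)) - (lam + mu) * snd (c (i - n))
     else 0)"

definition cyc_code :: "nat \<Rightarrow> 'a::field poly \<Rightarrow> (nat \<Rightarrow> 'a) set" where
  "cyc_code m g = {(\<lambda>i. coeff ((g * f) mod (monom 1 m - 1)) i) | f. True}"

text \<open>h^*(x) = (1/h(0)) x^(deg h) h(1/x).\<close>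
definition recip :: "'a::field poly \<Rightarrow> 'a poly" where
  "recip h = smult (inverse (coeff h 0)) (reflect_poly h)"

end

theory Submission
  imports Defs
begin

text \<open>
  By the Chinese remainder theorem, r + vq \<mapsto> (r + q, r) identifies R[x]/<x^n - \<vartheta>> with
  F_p[x]/<x^n - (\<lambda> + \<mu>)> \<times> F_p[x]/<x^n - \<lambda>>, and C with <g_{1-v}> \<times> <g_v>.
  For \<vartheta> = \<plusminus>(1 - 2v) we have \<lambda>^2 = 1 and \<lambda> + \<mu> = -\<lambda>, so the two moduli
  are coprime with product x^{2n} - 1. The Gray image of the word with components (a, b) is
  the polynomial (b - a) + \<lambda>x^n(a + b), which is -2a modulo x^n + \<lambda> and 2b modulo x^n - \<lambda>;
  since 2 is invertible this gives \<phi>(C) = [g_{1-v} g_v].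
  The Gray map doubles the sum of the inner products of the two components, and C is closed
  under multiplication by the idempotents v and 1 - v, so \<phi>(C^\<perp>) = \<phi>(C)^\<perp>.
  Finally the dual of a cyclic code [g] with g h = x^{2n} - 1 is [h^*].
\<close>

lemma of_nat_card_UNIV_eq_0: "of_nat (card (UNIV :: 'a::{finite, ring_1} set)) = (0::'a)"
proof -
  have "(\<Sum>x\<in>UNIV. x + 1) = (\<Sum>x\<in>UNIV. x :: 'a)"
    by (rule sum.reindex_bij_witness[where i = "\<lambda>x. x - 1" and j = "\<lambda>x. x + 1"]) auto
  then show ?thesis
    by (simp add: sum.distrib)
qed

lemma two_neq_0_if_odd_card:
  assumes "odd (card (UNIV :: 'a::{finite, field} set))"
  shows "(2::'a) \<noteq> 0"
proof
  assume two: "(2::'a) = 0"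
  obtain k where "card (UNIV :: 'a set) = 2 * k + 1"
    using assms oddE by blast
  then have "(1::'a) = 0"
    using of_nat_card_UNIV_eq_0[where ?'a = 'a] two by simp
  then show False
    by simp
qed

section \<open>Reduction modulo x^n - s\<close>

definition xn_minus :: "nat \<Rightarrow> 'a::comm_ring_1 \<Rightarrow> 'a poly" where
  "xn_minus n s = monom 1 n - [:s:]"

lemma coeff_xn_minus:
  "coeff (xn_minus n s) i = (if i = n then 1 else 0) - (if i = 0 then s else 0)"
  by (simp add: xn_minus_def coeff_monom coeff_pCons split: nat.split)

lemma degree_xn_minus:
  assumes "n > 0"
  shows "degree (xn_minus n s) = n"
proof -
  have "xn_minus n s = monom 1 n + [:-s:]"
    by (simp add: xn_minus_def)
  also have "degree \<dots> = n"
    using assms by (subst degree_add_eq_left) (auto simp: degree_monom_eq)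
  finally show ?thesis .
qed

lemma xn_minus_neq_0: "n > 0 \<Longrightarrow> xn_minus n s \<noteq> 0"
  using degree_xn_minus[of n s] by auto

lemma degree_mod_xn_minus:
  fixes P :: "'a::field poly"
  assumes "n > 0"
  shows "degree (P mod xn_minus n s) < n"
proof (cases "P mod xn_minus n s = 0")
  case False
  then show ?thesis
    using degree_mod_less'[OF xn_minus_neq_0[OF assms] False] degree_xn_minus[OF assms, of s] by simp
qed (use assms in simp)

lemma mod_xn_minus_eq_self:
  fixes P :: "'a::field poly"
  assumes "n > 0" "degree P < n"
  shows "P mod xn_minus n s = P"
  using assms by (intro mod_poly_less) (simp add: degree_xn_minus)

lemma poly_cutoff_plus_shift:
  fixes P :: "'a::comm_semiring_1 poly"
  shows "poly_cutoff n P + monom 1 n * poly_shift n P = P"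
  by (rule poly_eqI) (simp add: coeff_poly_cutoff coeff_poly_shift coeff_monom_mult)

lemma degree_poly_cutoff_less: "n > 0 \<Longrightarrow> degree (poly_cutoff n P) < n"
  by (intro degree_lessI) (auto simp: coeff_poly_cutoff)

lemma degree_poly_shift_le: "degree (poly_shift n P) \<le> degree P - n"
  by (rule degree_le) (auto simp: coeff_poly_shift coeff_eq_0)

definition wrap_coeff :: "'a::comm_ring_1 \<Rightarrow> nat \<Rightarrow> nat \<Rightarrow> 'a poly \<Rightarrow> nat \<Rightarrow> 'a" where
  "wrap_coeff s n K P i = (\<Sum>k\<le>K. s ^ k * coeff P (k * n + i))"

lemma wrap_coeff_0 [simp]: "wrap_coeff s n 0 P i = coeff P i"
  by (simp add: wrap_coeff_def)

lemma wrap_coeff_Suc: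
  "wrap_coeff s n (Suc K) P i = coeff P i + s * wrap_coeff s n K (poly_shift n P) i"
  unfolding wrap_coeff_def sum.atMost_Suc_shift
  by (simp add: sum_distrib_left coeff_poly_shift algebra_simps)

lemma coeff_mod_xn_minus:
  fixes P :: "'a::field poly"
  assumes n: "n > 0" and i: "i < n"
  shows "degree P < Suc K * n \<Longrightarrow> coeff (P mod xn_minus n s) i = wrap_coeff s n K P i"
proof (induction K arbitrary: P)
  case 0
  then show ?case
    using n by (simp add: mod_xn_minus_eq_self)
next
  case (Suc K)
  let ?M = "xn_minus n s"
  have "P = (poly_cutoff n P + smult s (poly_shift n P)) + ?M * poly_shift n P"
    using poly_cutoff_plus_shift[of n P] by (simp add: xn_minus_def algebra_simps)
  then have "P mod ?M = (poly_cutoff n P + smult s (poly_shift n P)) mod ?M"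
    by (metis mod_mult_self2)
  also have "\<dots> = poly_cutoff n P + smult s (poly_shift n P mod ?M)"
    using n by (simp add: poly_mod_add_left mod_smult_left mod_xn_minus_eq_self
        degree_poly_cutoff_less)
  finally have "coeff (P mod ?M) i = coeff P i + s * coeff (poly_shift n P mod ?M) i"
    using i by (simp add: coeff_poly_cutoff)
  moreover have "degree (poly_shift n P) < Suc K * n"
    using degree_poly_shift_le[of n P] Suc.prems n by (simp add: less_diff_conv2)
  ultimately show ?case
    using Suc.IH by (simp add: wrap_coeff_Suc)
qed

lemma pCons0_mod_xn_minus:
  fixes Z :: "'a::field poly"
  assumes n: "n > 0" and dZ: "degree Z < n"
  shows "pCons 0 Z mod xn_minus n s = pCons 0 Z - smult (coeff Z (n - 1)) (xn_minus n s)"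
proof -
  let ?r = "pCons 0 Z - smult (coeff Z (n - 1)) (xn_minus n s)"
  have "coeff ?r i = 0" if "i \<ge> n" for i
    using n dZ that
    by (cases "i = n") (auto simp: coeff_xn_minus coeff_pCons coeff_eq_0 split: nat.split)
  then have "degree ?r < n"
    using n by (intro degree_lessI) auto
  moreover have "pCons 0 Z = ?r + xn_minus n s * [:coeff Z (n - 1):]"
    by simp
  ultimately show ?thesis
    by (metis mod_mult_self2 mod_xn_minus_eq_self n)
qed

lemma coeff_pCons0_mod_xn_minus:
  fixes Z :: "'a::field poly"
  assumes n: "n > 0" and i: "i < n"
  shows "coeff (pCons 0 Z mod xn_minus n s) i =
    (if i = 0 then s * coeff (Z mod xn_minus n s) (n - 1) else coeff (Z mod xn_minus n s) (i - 1))"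
proof -
  have "pCons 0 Z mod xn_minus n s = pCons 0 (Z mod xn_minus n s) mod xn_minus n s"
    using mod_mult_right_eq[of "[:0, 1:]" Z "xn_minus n s"] by simp
  also have "\<dots> = pCons 0 (Z mod xn_minus n s) -
      smult (coeff (Z mod xn_minus n s) (n - 1)) (xn_minus n s)"
    using n by (intro pCons0_mod_xn_minus degree_mod_xn_minus)
  finally show ?thesis
    using i n by (auto simp: coeff_xn_minus coeff_pCons split: nat.split)
qed

section \<open>Words over R as pairs of residues\<close>

text \<open>The word r + vq whose components r + q (at v = 1) and r (at v = 0) are the residues
  of P modulo x^n - (\<lambda> + \<mu>) and of Q modulo x^n - \<lambda>.\<close>

definition crt_word :: "'a::field \<Rightarrow> 'a \<Rightarrow> nat \<Rightarrow> 'a poly \<Rightarrow> 'a poly \<Rightarrow> nat \<Rightarrow> 'a \<times> 'a" where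
  "crt_word lam mu n P Q = (\<lambda>i. if i < n then
     (coeff (Q mod xn_minus n lam) i,
      coeff (P mod xn_minus n (lam + mu)) i - coeff (Q mod xn_minus n lam) i)
   else (0, 0))"

lemma crt_word_in_Rwords: "crt_word lam mu n P Q \<in> Rwords n"
  by (simp add: crt_word_def Rwords_def)

lemma crt_word_0: "crt_word lam mu n 0 0 = (\<lambda>i. (0, 0))"
  by (rule ext) (simp add: crt_word_def)

lemma Radd_crt_word:
  "Radd (crt_word lam mu n P Q i) (crt_word lam mu n P' Q' i) = crt_word lam mu n (P + P') (Q + Q') i"
  by (simp add: crt_word_def Radd_def poly_mod_add_left)

lemma Rmul_crt_word:
  "Rmul a (crt_word lam mu n P Q i) =
    crt_word lam mu n (smult (fst a + snd a) P) (smult (fst a) Q) i"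
  by (simp add: crt_word_def Rmul_def mod_smult_left algebra_simps)

lemma cshift_crt_word:
  assumes n: "n > 0"
  shows "cshift (lam, mu) n (crt_word lam mu n P Q) = crt_word lam mu n (pCons 0 P) (pCons 0 Q)"
proof
  fix i
  show "cshift (lam, mu) n (crt_word lam mu n P Q) i = crt_word lam mu n (pCons 0 P) (pCons 0 Q) i"
  proof (cases "i < n")
    case True
    then show ?thesis
      using n coeff_pCons0_mod_xn_minus[OF n True, of P "lam + mu"]
        coeff_pCons0_mod_xn_minus[OF n True, of Q lam]
      by (simp add: cshift_def crt_word_def Rmul_def algebra_simps)
  qed (use n in \<open>simp add: cshift_def crt_word_def\<close>)
qed

lemma Rpow_eq: "Rpow (l, m) k = (l ^ k, (l + m) ^ k - l ^ k)"
  by (induction k) (simp_all add: Rmul_def algebra_simps)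

lemma polyword_eq_crt_word:
  assumes n: "n > 0"
  shows "polyword (lam, mu) n (f1, f2) = crt_word lam mu n (f1 + f2) f1"
proof
  fix i
  let ?K = "degree f1 + degree f2"
  have "Suc ?K \<le> Suc ?K * n"
    using n mult_le_mono2[of 1 n "Suc ?K"] by simp
  then have "?K < Suc ?K * n"
    by linarith
  then have deg: "degree f1 < Suc ?K * n" "degree (f1 + f2) < Suc ?K * n"
    using degree_add_le[of f1 ?K f2] by simp_all
  show "polyword (lam, mu) n (f1, f2) i = crt_word lam mu n (f1 + f2) f1 i"
  proof (cases "i < n")
    case True
    have "(\<Sum>k\<le>?K. fst (Rmul (Rpow (lam, mu) k) (coeff f1 (k * n + i), coeff f2 (k * n + i))))
        = wrap_coeff lam n ?K f1 i"
      by (simp add: wrap_coeff_def Rpow_eq Rmul_def)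
    moreover have "(\<Sum>k\<le>?K. snd (Rmul (Rpow (lam, mu) k) (coeff f1 (k * n + i), coeff f2 (k * n + i))))
        = wrap_coeff (lam + mu) n ?K (f1 + f2) i - wrap_coeff lam n ?K f1 i"
      by (simp add: wrap_coeff_def Rpow_eq Rmul_def sum_subtractf[symmetric] algebra_simps)
    ultimately show ?thesis
      using True coeff_mod_xn_minus[OF n True deg(1), of lam]
        coeff_mod_xn_minus[OF n True deg(2), of "lam + mu"]
      by (simp add: polyword_def crt_word_def)
  qed (simp add: polyword_def crt_word_def)
qed

lemma gen_code_least: "is_constacyclic t n D \<Longrightarrow> S \<subseteq> D \<Longrightarrow> gen_code t n S \<subseteq> D"
  unfolding gen_code_def by blast

lemma subset_gen_code: "S \<subseteq> gen_code t n S"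
  unfolding gen_code_def by blast

lemma is_constacyclic_crt_words:
  assumes n: "n > 0"
  shows "is_constacyclic (lam, mu) n {crt_word lam mu n (g1 * u) (g2 * w) | u w. True}"
  unfolding is_constacyclic_def
proof (intro conjI ballI allI)
  let ?D = "{crt_word lam mu n (g1 * u) (g2 * w) | u w. True}"
  show "?D \<subseteq> Rwords n"
    using crt_word_in_Rwords by blast
  show "(\<lambda>i. (0, 0)) \<in> ?D"
    unfolding mem_Collect_eq by (intro exI[of _ 0]) (simp add: crt_word_0)
next
  fix c d
  assume "c \<in> {crt_word lam mu n (g1 * u) (g2 * w) | u w. True}"
    and "d \<in> {crt_word lam mu n (g1 * u) (g2 * w) | u w. True}"
  then obtain u w u' w' where "c = crt_word lam mu n (g1 * u) (g2 * w)"
    and "d = crt_word lam mu n (g1 * u') (g2 * w')"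
    by blast
  then have "(\<lambda>i. Radd (c i) (d i)) = crt_word lam mu n (g1 * (u + u')) (g2 * (w + w'))"
    by (simp add: Radd_crt_word distrib_left)
  then show "(\<lambda>i. Radd (c i) (d i)) \<in> {crt_word lam mu n (g1 * u) (g2 * w) | u w. True}"
    by blast
next
  fix a c
  assume "c \<in> {crt_word lam mu n (g1 * u) (g2 * w) | u w. True}"
  then obtain u w where "c = crt_word lam mu n (g1 * u) (g2 * w)"
    by blast
  then have "(\<lambda>i. Rmul a (c i)) =
      crt_word lam mu n (g1 * smult (fst a + snd a) u) (g2 * smult (fst a) w)"
    by (simp add: Rmul_crt_word)
  then show "(\<lambda>i. Rmul a (c i)) \<in> {crt_word lam mu n (g1 * u) (g2 * w) | u w. True}"
    by blast
next
  fix c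
  assume "c \<in> {crt_word lam mu n (g1 * u) (g2 * w) | u w. True}"
  then obtain u w where "c = crt_word lam mu n (g1 * u) (g2 * w)"
    by blast
  then have "cshift (lam, mu) n c = crt_word lam mu n (g1 * pCons 0 u) (g2 * pCons 0 w)"
    by (simp add: cshift_crt_word[OF n])
  then show "cshift (lam, mu) n c \<in> {crt_word lam mu n (g1 * u) (g2 * w) | u w. True}"
    by blast
qed

lemma is_constacyclicD:
  assumes "is_constacyclic t n C"
  shows "(\<lambda>i. (0, 0)) \<in> C"
    and "c \<in> C \<Longrightarrow> d \<in> C \<Longrightarrow> (\<lambda>i. Radd (c i) (d i)) \<in> C"
    and "c \<in> C \<Longrightarrow> (\<lambda>i. Rmul a (c i)) \<in> C"
    and "c \<in> C \<Longrightarrow> cshift t n c \<in> C"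
  using assms unfolding is_constacyclic_def by blast+

lemma crt_word_mult_in_code:
  assumes n: "n > 0" and C: "is_constacyclic (lam, mu) n C"
    and c: "crt_word lam mu n P Q \<in> C"
  shows "crt_word lam mu n (P * u) (Q * u) \<in> C"
proof (induction u)
  case 0
  then show ?case
    using is_constacyclicD(1)[OF C] by (simp add: crt_word_0)
next
  case (pCons a u)
  have "crt_word lam mu n (P * pCons a u) (Q * pCons a u) =
      (\<lambda>i. Radd (Rmul (a, 0) (crt_word lam mu n P Q i))
                 (cshift (lam, mu) n (crt_word lam mu n (P * u) (Q * u)) i))"
    by (simp add: cshift_crt_word[OF n] Rmul_crt_word Radd_crt_word)
  also have "\<dots> \<in> C"
    by (intro is_constacyclicD[OF C] c pCons.IH)
  finally show ?case .
qed

lemma constacyclic_code_eq_crt_words: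
  assumes n: "n > 0" and cc: "is_constacyclic (lam, mu) n C"
    and gen: "C = gen_code (lam, mu) n
               {polyword (lam, mu) n (0, g1), polyword (lam, mu) n (g2, - g2)}"
  shows "C = {crt_word lam mu n (g1 * u) (g2 * w) | u w. True}"
proof (rule subset_antisym)
  have gens: "{polyword (lam, mu) n (0, g1), polyword (lam, mu) n (g2, - g2)} =
      {crt_word lam mu n g1 0, crt_word lam mu n 0 g2}"
    using polyword_eq_crt_word[OF n, of lam mu 0 g1] polyword_eq_crt_word[OF n, of lam mu g2 "- g2"]
    by simp
  have "crt_word lam mu n g1 0 \<in> {crt_word lam mu n (g1 * u) (g2 * w) | u w. True}"
    by (rule CollectI, rule exI[of _ 1], rule exI[of _ 0]) simp
  moreover have "crt_word lam mu n 0 g2 \<in> {crt_word lam mu n (g1 * u) (g2 * w) | u w. True}"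
    by (rule CollectI, rule exI[of _ 0], rule exI[of _ 1]) simp
  ultimately show "C \<subseteq> {crt_word lam mu n (g1 * u) (g2 * w) | u w. True}"
    unfolding gen gens by (intro gen_code_least is_constacyclic_crt_words n) simp
  have "{crt_word lam mu n g1 0, crt_word lam mu n 0 g2} \<subseteq> C"
    unfolding gen gens[symmetric] by (rule subset_gen_code)
  then have gens_in_C: "crt_word lam mu n g1 0 \<in> C" "crt_word lam mu n 0 g2 \<in> C"
    by simp_all
  show "{crt_word lam mu n (g1 * u) (g2 * w) | u w. True} \<subseteq> C"
  proof clarify
    fix u w
    have "crt_word lam mu n (g1 * u) 0 \<in> C" "crt_word lam mu n 0 (g2 * w) \<in> C"
      using crt_word_mult_in_code[OF n cc gens_in_C(1), of u]
        crt_word_mult_in_code[OF n cc gens_in_C(2), of w]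
      by simp_all
    then have "(\<lambda>i. Radd (crt_word lam mu n (g1 * u) 0 i) (crt_word lam mu n 0 (g2 * w) i)) \<in> C"
      by (rule is_constacyclicD(2)[OF cc])
    then show "crt_word lam mu n (g1 * u) (g2 * w) \<in> C"
      by (simp add: Radd_crt_word)
  qed
qed

section \<open>The Gray map and Euclidean duality\<close>

definition inner_at_v1 :: "nat \<Rightarrow> (nat \<Rightarrow> 'a::comm_ring_1 \<times> 'a) \<Rightarrow> (nat \<Rightarrow> 'a \<times> 'a) \<Rightarrow> 'a" where
  "inner_at_v1 n c d = (\<Sum>i<n. (fst (c i) + snd (c i)) * (fst (d i) + snd (d i)))"

definition inner_at_v0 :: "nat \<Rightarrow> (nat \<Rightarrow> 'a::comm_ring_1 \<times> 'a) \<Rightarrow> (nat \<Rightarrow> 'a \<times> 'a) \<Rightarrow> 'a" where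
  "inner_at_v0 n c d = (\<Sum>i<n. fst (c i) * fst (d i))"

lemma mem_Rdual_iff:
  "d \<in> Rdual n C \<longleftrightarrow>
    d \<in> Rwords n \<and> (\<forall>c\<in>C. inner_at_v1 n c d = 0 \<and> inner_at_v0 n c d = 0)"
proof -
  have "(\<Sum>i<n. snd (Rmul (c i) (d i))) = inner_at_v1 n c d - inner_at_v0 n c d" for c
    unfolding inner_at_v1_def inner_at_v0_def sum_subtractf[symmetric]
    by (rule sum.cong) (simp_all add: Rmul_def algebra_simps)
  moreover have "(\<Sum>i<n. fst (Rmul (c i) (d i))) = inner_at_v0 n c d" for c
    by (simp add: inner_at_v0_def Rmul_def)
  ultimately show ?thesis
    by (auto simp: Rdual_def)
qed

lemma inner_at_Rmul_v:
  "inner_at_v1 n (\<lambda>i. Rmul (0, 1) (c i)) d = inner_at_v1 n c d"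
  "inner_at_v0 n (\<lambda>i. Rmul (0, 1) (c i)) d = 0"
  by (simp_all add: inner_at_v1_def inner_at_v0_def Rmul_def)

lemma inner_at_Rmul_1_minus_v:
  "inner_at_v1 n (\<lambda>i. Rmul (1, -1) (c i)) d = 0"
  "inner_at_v0 n (\<lambda>i. Rmul (1, -1) (c i)) d = inner_at_v0 n c d"
  by (simp_all add: inner_at_v1_def inner_at_v0_def Rmul_def)

lemma sum_lessThan_double: "(\<Sum>i<2 * (n::nat). f i) = (\<Sum>i<n. f i) + (\<Sum>i<n. f (i + n))"
proof -
  have "(\<Sum>i<2 * n. f i) = sum f {0..<n} + sum f {n..<2 * n}"
    by (simp add: sum.atLeastLessThan_concat atLeast0LessThan[symmetric])
  also have "sum f {n..<2 * n} = (\<Sum>i=0..<n. f (i + n))"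
    using sum.shift_bounds_nat_ivl[of f 0 n n] by (simp add: mult_2)
  finally show ?thesis
    by (simp add: atLeast0LessThan)
qed

lemma gray_inner:
  fixes lam mu :: "'a::field"
  assumes hl: "lam * lam = 1" and hs: "mu = -2 * lam"
  shows "(\<Sum>i<2 * n. gray lam mu n c i * gray lam mu n d i) =
    2 * (inner_at_v1 n c d + inner_at_v0 n c d)"
proof -
  have l: "lam * (lam + mu) = -1"
    using hl hs by (simp add: algebra_simps)
  have "(\<Sum>i<2 * n. gray lam mu n c i * gray lam mu n d i) =
      (\<Sum>i<n. snd (c i) * snd (d i) +
        (2 * lam * fst (c i) + lam * snd (c i)) * (2 * lam * fst (d i) + lam * snd (d i)))"
    unfolding sum_lessThan_double sum.distrib
    using l hs by (intro arg_cong2[where f = "(+)"] sum.cong) (auto simp: gray_def algebra_simps)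
  also have "\<dots> = (\<Sum>i<n. 2 * ((fst (c i) + snd (c i)) * (fst (d i) + snd (d i))) +
      2 * (fst (c i) * fst (d i)))"
  proof (rule sum.cong[OF refl])
    fix i
    let ?r = "fst (c i)" and ?q = "snd (c i)" and ?r' = "fst (d i)" and ?q' = "snd (d i)"
    have "(2 * lam * ?r + lam * ?q) * (2 * lam * ?r' + lam * ?q') =
        (lam * lam) * ((2 * ?r + ?q) * (2 * ?r' + ?q'))"
      by (simp add: algebra_simps)
    then show "?q * ?q' + (2 * lam * ?r + lam * ?q) * (2 * lam * ?r' + lam * ?q') =
        2 * ((?r + ?q) * (?r' + ?q')) + 2 * (?r * ?r')"
      using hl by (simp add: algebra_simps)
  qed
  also have "\<dots> = 2 * (inner_at_v1 n c d + inner_at_v0 n c d)"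
    by (simp add: inner_at_v1_def inner_at_v0_def sum.distrib sum_distrib_left distrib_left)
  finally show ?thesis .
qed

lemma gray_surj:
  fixes lam mu :: "'a::field"
  assumes hl: "lam * lam = 1" and hs: "mu = -2 * lam" and two: "(2::'a) \<noteq> 0"
    and e: "e \<in> Fwords (2 * n)"
  shows "\<exists>d \<in> Rwords n. gray lam mu n d = e"
proof
  define d where "d = (\<lambda>i. if i < n then ((lam * e (i + n) + e i) / 2, - e i) else (0, 0))"
  show "d \<in> Rwords n"
    by (simp add: d_def Rwords_def)
  have l: "lam * (lam + mu) = -1"
    using hl hs by (simp add: algebra_simps)
  have "gray lam mu n d i = e i" for i
  proof (cases "i < n")
    case True
    then show ?thesis
      using l by (simp add: gray_def d_def)
  next
    case False
    show ?thesis
    proof (cases "i < 2 * n")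
      case True
      have "- mu * ((lam * e i + e (i - n)) / 2) - (lam + mu) * - e (i - n) = lam * lam * e i"
        using hs two by (simp add: field_simps)
      then show ?thesis
        using True False hl by (simp add: gray_def d_def)
    next
      case False
      then show ?thesis
        using \<open>\<not> i < n\<close> e by (simp add: gray_def d_def Fwords_def)
    qed
  qed
  then show "gray lam mu n d = e" ..
qed

lemma gray_Rdual_eq_Fdual:
  fixes lam mu :: "'a::field"
  assumes hl: "lam * lam = 1" and hs: "mu = -2 * lam" and two: "(2::'a) \<noteq> 0"
    and mulC: "\<And>a c. c \<in> C \<Longrightarrow> (\<lambda>i. Rmul a (c i)) \<in> C"
  shows "gray lam mu n ` Rdual n C = Fdual (2 * n) (gray lam mu n ` C)"
proof
  show "gray lam mu n ` Rdual n C \<subseteq> Fdual (2 * n) (gray lam mu n ` C)"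
    by (auto simp: mem_Rdual_iff Fdual_def Fwords_def gray_inner[OF hl hs]) (simp add: gray_def)
next
  show "Fdual (2 * n) (gray lam mu n ` C) \<subseteq> gray lam mu n ` Rdual n C"
  proof
    fix e
    assume eF: "e \<in> Fdual (2 * n) (gray lam mu n ` C)"
    then obtain d where d: "d \<in> Rwords n" and de: "gray lam mu n d = e"
      using gray_surj[OF hl hs two, of e n] by (auto simp: Fdual_def)
    have "inner_at_v1 n c d = 0 \<and> inner_at_v0 n c d = 0" if c: "c \<in> C" for c
    proof -
      have "2 * (inner_at_v1 n (\<lambda>i. Rmul a (c i)) d + inner_at_v0 n (\<lambda>i. Rmul a (c i)) d) = 0" for a
        using eF mulC[OF c, of a] by (auto simp: Fdual_def de[symmetric] gray_inner[OF hl hs])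
      from this[of "(0, 1)"] this[of "(1, -1)"] show ?thesis
        using two by (simp add: inner_at_Rmul_v inner_at_Rmul_1_minus_v)
    qed
    then have "d \<in> Rdual n C"
      using d by (simp add: mem_Rdual_iff)
    then show "e \<in> gray lam mu n ` Rdual n C"
      using de by blast
  qed
qed

section \<open>The Gray image is a cyclic code\<close>

lemma xn_minus_1: "xn_minus n (1::'a::comm_ring_1) = monom 1 n - 1"
  by (simp add: xn_minus_def one_pCons)

lemma cyc_code_eq_multiples:
  fixes G :: "'a::field poly"
  assumes m: "m > 0" and G: "G dvd monom 1 m - 1"
  shows "cyc_code m G = {coeff w | w. degree w < m \<and> G dvd w}"
proof (intro equalityI subsetI)
  fix c
  assume "c \<in> cyc_code m G"
  then obtain f where c: "c = coeff ((G * f) mod xn_minus m 1)"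
    by (auto simp: cyc_code_def xn_minus_1)
  have "G dvd (G * f) mod xn_minus m 1"
    using G by (simp add: xn_minus_1 dvd_mod)
  then show "c \<in> {coeff w | w. degree w < m \<and> G dvd w}"
    using c degree_mod_xn_minus[OF m] by blast
next
  fix c
  assume "c \<in> {coeff w | w. degree w < m \<and> G dvd w}"
  then obtain w f where "c = coeff w" "degree w < m" "w = G * f"
    by blast
  then have "c = coeff ((G * f) mod (monom 1 m - 1))"
    using mod_xn_minus_eq_self[OF m, of w 1] by (simp add: xn_minus_1)
  then show "c \<in> cyc_code m G"
    unfolding cyc_code_def by blast
qed

lemma xn_minus_mult_xn_minus_uminus:
  fixes lam :: "'a::comm_ring_1"
  assumes "lam * lam = 1"
  shows "xn_minus n (- lam) * xn_minus n lam = monom 1 (2 * n) - 1"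
proof -
  have "xn_minus n (- lam) * xn_minus n lam = monom 1 n * monom 1 n - [:lam * lam:]"
    by (simp add: xn_minus_def algebra_simps)
  also have "\<dots> = monom 1 (2 * n) - 1"
    using assms by (simp add: mult_monom mult_2 one_pCons)
  finally show ?thesis .
qed

definition gray_poly :: "'a::comm_ring_1 \<Rightarrow> nat \<Rightarrow> 'a poly \<Rightarrow> 'a poly \<Rightarrow> 'a poly" where
  "gray_poly lam n a b = (b - a) + monom lam n * (a + b)"

lemma degree_gray_poly_less:
  assumes "degree a < n" "degree b < n"
  shows "degree (gray_poly lam n a b) < 2 * n"
  using assms by (intro degree_lessI) (auto simp: gray_poly_def coeff_monom_mult coeff_eq_0)

lemma gray_crt_word:
  fixes lam mu :: "'a::field"
  assumes n: "n > 0" and hl: "lam * lam = 1" and hs: "mu = -2 * lam"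
  shows "gray lam mu n (crt_word lam mu n P Q) =
    coeff (gray_poly lam n (P mod xn_minus n (lam + mu)) (Q mod xn_minus n lam))"
proof
  fix i
  let ?a = "P mod xn_minus n (lam + mu)" and ?b = "Q mod xn_minus n lam"
  have deg: "degree ?a < n" "degree ?b < n"
    using degree_mod_xn_minus[OF n] by blast+
  have l: "lam * (lam + mu) = -1"
    using hl hs by (simp add: algebra_simps)
  show "gray lam mu n (crt_word lam mu n P Q) i = coeff (gray_poly lam n ?a ?b) i"
  proof (cases "i < n")
    case True
    then show ?thesis
      using l by (simp add: gray_def crt_word_def gray_poly_def coeff_monom_mult)
  next
    case False
    then have "coeff ?a i = 0" "coeff ?b i = 0"
      using deg by (auto intro: coeff_eq_0)
    moreover have "- mu * coeff ?b (i - n) - (lam + mu) * (coeff ?a (i - n) - coeff ?b (i - n)) =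
        lam * (coeff ?a (i - n) + coeff ?b (i - n))"
      using hs by (simp add: algebra_simps)
    moreover have "\<not> i < 2 * n \<Longrightarrow> coeff ?a (i - n) = 0 \<and> coeff ?b (i - n) = 0"
      using deg by (auto intro: coeff_eq_0)
    ultimately show ?thesis
      using False by (auto simp: gray_def crt_word_def gray_poly_def coeff_monom_mult)
  qed
qed

lemma smult_2: "smult 2 p = p + (p :: 'a::comm_ring_1 poly)"
  by (rule poly_eqI) (simp only: coeff_smult coeff_add mult_2)

lemma smult_xn_minus_mult:
  fixes lam :: "'a::comm_ring_1"
  assumes "lam * lam = 1"
  shows "smult lam (xn_minus n (- lam) * p) = monom lam n * p + p"
    and "smult lam (xn_minus n lam * p) = monom lam n * p - p"
  using assms by (simp_all add: xn_minus_def algebra_simps smult_add_right smult_diff_right smult_monom flip: mult_smult_right)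

lemma gray_poly_eq_mod_plus:
  fixes lam :: "'a::comm_ring_1"
  assumes "lam * lam = 1"
  shows "gray_poly lam n a b = smult (- 2) a + smult lam (xn_minus n (- lam) * (a + b))"
  using assms by (simp add: smult_xn_minus_mult gray_poly_def smult_2)

lemma gray_poly_eq_mod_minus:
  fixes lam :: "'a::comm_ring_1"
  assumes "lam * lam = 1"
  shows "gray_poly lam n a b = smult 2 b + smult lam (xn_minus n lam * (a + b))"
  using assms by (simp add: smult_xn_minus_mult gray_poly_def smult_2)

lemma mult_dvd_if_moduli_differ_by_const:
  fixes g1 g2 M1 M2 c :: "'a::field poly"
  assumes "g1 dvd M1" "g2 dvd M2" "M1 - M2 = [:e:]" "e \<noteq> 0"
    and "g1 dvd c" "g2 dvd c"
  shows "g1 * g2 dvd c"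
proof -
  obtain p1 p2 q1 q2 where "M1 = g1 * p1" "M2 = g2 * p2" "c = g1 * q1" "c = g2 * q2"
    using assms(1,2,5,6) by (elim dvdE)
  then have "c * M1 = (g1 * g2) * (q2 * p1)" "c * M2 = (g1 * g2) * (q1 * p2)"
    by (simp_all add: ac_simps)
  then have "g1 * g2 dvd c * M1 - c * M2"
    by (simp add: dvd_diff)
  also have "c * M1 - c * M2 = smult e c"
    by (simp add: right_diff_distrib[symmetric] assms(3))
  finally show ?thesis
    using assms(4) by (rule dvd_smult_cancel)
qed

lemma mult_dvd_gray_poly_iff:
  fixes lam :: "'a::field"
  assumes hl: "lam * lam = 1" and two: "(2::'a) \<noteq> 0"
    and g1: "g1 dvd xn_minus n (- lam)" and g2: "g2 dvd xn_minus n lam"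
  shows "g1 * g2 dvd gray_poly lam n a b \<longleftrightarrow> g1 dvd a \<and> g2 dvd b"
proof -
  have diff: "xn_minus n (- lam) - xn_minus n lam = [:2 * lam:]"
    by (simp add: xn_minus_def)
  have nz: "2 * lam \<noteq> 0"
    using hl two by auto
  have "g1 * g2 dvd gray_poly lam n a b \<longleftrightarrow>
      g1 dvd gray_poly lam n a b \<and> g2 dvd gray_poly lam n a b"
    using mult_dvd_if_moduli_differ_by_const[OF g1 g2 diff nz, of "gray_poly lam n a b"]
      dvd_mult_left[of g1 g2 "gray_poly lam n a b"] dvd_mult_right[of g1 g2 "gray_poly lam n a b"]
    by blast
  also have "g1 dvd gray_poly lam n a b \<longleftrightarrow> g1 dvd smult (- 2) a"
    unfolding gray_poly_eq_mod_plus[OF hl]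
    by (rule dvd_add_left_iff) (simp add: g1 dvd_smult dvd_mult2)
  also have "\<dots> \<longleftrightarrow> g1 dvd a"
    using two by (simp add: dvd_smult_iff)
  also have "g2 dvd gray_poly lam n a b \<longleftrightarrow> g2 dvd smult 2 b"
    unfolding gray_poly_eq_mod_minus[OF hl]
    by (rule dvd_add_left_iff) (simp add: g2 dvd_smult dvd_mult2)
  also have "\<dots> \<longleftrightarrow> g2 dvd b"
    using two by (simp add: dvd_smult_iff)
  finally show ?thesis .
qed

lemma gray_poly_surj:
  fixes lam :: "'a::field"
  assumes hl: "lam * lam = 1" and two: "(2::'a) \<noteq> 0" and n: "n > 0"
    and w: "degree w < 2 * n"
  obtains a b where "degree a < n" "degree b < n" "gray_poly lam n a b = w"
proof
  let ?l = "poly_cutoff n w" and ?h = "poly_shift n w"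
  define a where "a = smult (inverse 2) (smult lam ?h - ?l)"
  define b where "b = smult (inverse 2) (?l + smult lam ?h)"
  have "degree ?h < n"
    using degree_poly_shift_le[of n w] w by linarith
  then show "degree a < n" "degree b < n"
    using degree_poly_cutoff_less[OF n, of w] by (auto simp: a_def b_def intro: degree_diff_less degree_add_less)
  have "b - a = ?l"
    using two by (intro poly_eqI) (simp add: a_def b_def diff_divide_distrib[symmetric])
  moreover have "a + b = smult lam ?h"
    using two by (intro poly_eqI) (simp add: a_def b_def add_divide_distrib[symmetric])
  moreover have "monom lam n * smult lam ?h = monom 1 n * ?h"
    using hl by (intro poly_eqI) (simp add: coeff_monom_mult mult.assoc[symmetric])
  ultimately show "gray_poly lam n a b = w"
    by (simp add: gray_poly_def poly_cutoff_plus_shift)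
qed

lemma gray_crt_words_eq_cyc_code:
  fixes lam mu :: "'a::field"
  assumes n: "n > 0" and hl: "lam * lam = 1" and hs: "mu = -2 * lam" and two: "(2::'a) \<noteq> 0"
    and g1: "g1 dvd xn_minus n (lam + mu)" and g2: "g2 dvd xn_minus n lam"
  shows "gray lam mu n ` {crt_word lam mu n (g1 * u) (g2 * w) | u w. True} =
    cyc_code (2 * n) (g1 * g2)"
proof -
  have "lam + mu = - lam"
    using hs by simp
  note g1 = g1[unfolded this] and gray_crt_word = gray_crt_word[OF n hl hs, unfolded this]
  have "g1 * g2 dvd monom 1 (2 * n) - 1"
    using g1 g2 by (simp add: mult_dvd_mono flip: xn_minus_mult_xn_minus_uminus[OF hl])
  then have cyc: "cyc_code (2 * n) (g1 * g2) = {coeff w | w. degree w < 2 * n \<and> g1 * g2 dvd w}"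
    using n by (intro cyc_code_eq_multiples) auto
  have "gray lam mu n (crt_word lam mu n (g1 * u) (g2 * w)) \<in> cyc_code (2 * n) (g1 * g2)" for u w
  proof -
    let ?a = "(g1 * u) mod xn_minus n (- lam)" and ?b = "(g2 * w) mod xn_minus n lam"
    have "g1 dvd ?a" "g2 dvd ?b"
      using g1 g2 by (simp_all add: dvd_mod)
    then have "g1 * g2 dvd gray_poly lam n ?a ?b"
      using mult_dvd_gray_poly_iff[OF hl two g1 g2] by blast
    moreover have "degree (gray_poly lam n ?a ?b) < 2 * n"
      using n by (intro degree_gray_poly_less degree_mod_xn_minus)
    ultimately show ?thesis
      unfolding cyc gray_crt_word by blast
  qed
  moreover have "c \<in> gray lam mu n ` {crt_word lam mu n (g1 * u) (g2 * w) | u w. True}"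
    if c_in: "c \<in> cyc_code (2 * n) (g1 * g2)" for c
  proof -
    obtain w where c: "c = coeff w" and w: "degree w < 2 * n" "g1 * g2 dvd w"
      using c_in unfolding cyc by blast
    obtain a b where deg: "degree a < n" "degree b < n" and ab: "gray_poly lam n a b = w"
      using gray_poly_surj[OF hl two n w(1)] .
    have "g1 dvd a" "g2 dvd b"
      using w(2) mult_dvd_gray_poly_iff[OF hl two g1 g2, of a b] by (simp_all add: ab)
    then obtain u v where uv: "a = g1 * u" "b = g2 * v"
      by (elim dvdE)
    have "c = gray lam mu n (crt_word lam mu n (g1 * u) (g2 * v))"
      using n deg by (simp add: gray_crt_word mod_xn_minus_eq_self c flip: uv ab)
    then show ?thesis
      by blast
  qed
  ultimately show ?thesis
    by blast
qed

section \<open>The dual of a cyclic code\<close>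

definition rev_coeffs :: "nat \<Rightarrow> 'a::comm_ring_1 poly \<Rightarrow> 'a poly" where
  "rev_coeffs m w = (\<Sum>i<m. monom (coeff w i) (m - 1 - i))"

lemma coeff_rev_coeffs: "coeff (rev_coeffs m w) j = (if j < m then coeff w (m - 1 - j) else 0)"
proof -
  have "coeff (rev_coeffs m w) j =
      (\<Sum>i<m. if i = m - 1 - j then (if j < m then coeff w i else 0) else 0)"
    unfolding rev_coeffs_def coeff_sum coeff_monom by (rule sum.cong) auto
  also have "\<dots> = (if j < m then coeff w (m - 1 - j) else 0)"
    by (subst sum.delta) auto
  finally show ?thesis .
qed

lemma degree_rev_coeffs_less: "m > 0 \<Longrightarrow> degree (rev_coeffs m w) < m"
  by (intro degree_lessI) (auto simp: coeff_rev_coeffs)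

lemma rev_coeffs_rev_coeffs: "degree w < m \<Longrightarrow> rev_coeffs m (rev_coeffs m w) = w"
  by (rule poly_eqI) (auto simp: coeff_rev_coeffs coeff_eq_0)

lemma rev_coeffs_eq_reflect_poly:
  assumes "degree w < m"
  shows "rev_coeffs m w = monom 1 (m - 1 - degree w) * reflect_poly w"
  by (rule poly_eqI) (use assms in \<open>auto simp: coeff_rev_coeffs coeff_monom_mult coeff_reflect_poly coeff_eq_0\<close>)

lemma sum_coeff_mult_eq_coeff_mod:
  fixes U w :: "'a::field poly"
  assumes m: "m > 0" and dU: "degree U < m"
  shows "(\<Sum>i<m. coeff U i * coeff w i) = coeff ((U * rev_coeffs m w) mod xn_minus m 1) (m - 1)"
proof -
  let ?Z = "U * rev_coeffs m w"
  have dZ: "degree ?Z < 2 * m - 1"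
    using degree_mult_le[of U "rev_coeffs m w"] dU degree_rev_coeffs_less[OF m, of w] by linarith
  then have "coeff ((?Z mod xn_minus m 1)) (m - 1) = wrap_coeff 1 m 1 ?Z (m - 1)"
    using m by (intro coeff_mod_xn_minus) auto
  also have "\<dots> = coeff ?Z (m - 1)"
    using dZ m by (simp add: wrap_coeff_Suc coeff_poly_shift coeff_eq_0)
  also have "\<dots> = (\<Sum>i\<le>m - 1. coeff U i * coeff (rev_coeffs m w) (m - 1 - i))"
    by (rule coeff_mult)
  also have "\<dots> = (\<Sum>i<m. coeff U i * coeff w i)"
    using m by (auto simp: coeff_rev_coeffs atMost_atLeast0 atLeast0LessThan[symmetric]
        intro!: sum.cong)
  finally show ?thesis
    by simp
qed

lemma xn_minus_dvd_if_coeff_mod_eq_0: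
  fixes Z :: "'a::field poly"
  assumes m: "m > 0" and h: "\<And>f. coeff ((f * Z) mod xn_minus m 1) (m - 1) = 0"
  shows "xn_minus m 1 dvd Z"
proof -
  have shift: "coeff ((monom 1 j * Z) mod xn_minus m 1) (i + j) = coeff (Z mod xn_minus m 1) i"
    if "i + j < m" for i j
    using that
  proof (induction j)
    case (Suc j)
    then show ?case
      using coeff_pCons0_mod_xn_minus[OF m Suc.prems, of "monom 1 j * Z" 1]
      by (simp add: monom_Suc)
  qed simp
  have "coeff (Z mod xn_minus m 1) i = 0" for i
  proof (cases "i < m")
    case True
    then show ?thesis
      using shift[of i "m - 1 - i"] h[of "monom 1 (m - 1 - i)"] by simp
  next
    case False
    then show ?thesis
      using degree_mod_xn_minus[OF m, of Z 1] by (simp add: coeff_eq_0)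
  qed
  then have "Z mod xn_minus m 1 = 0"
    by (intro poly_eqI) simp
  then show ?thesis
    by (simp add: dvd_eq_mod_eq_0)
qed

lemma orthogonal_cyc_code_iff:
  fixes G w :: "'a::field poly"
  assumes m: "m > 0"
  shows "(\<forall>f. (\<Sum>i<m. coeff ((G * f) mod xn_minus m 1) i * coeff w i) = 0) \<longleftrightarrow>
    xn_minus m 1 dvd G * rev_coeffs m w"
proof -
  have "(\<Sum>i<m. coeff ((G * f) mod xn_minus m 1) i * coeff w i) =
      coeff ((f * (G * rev_coeffs m w)) mod xn_minus m 1) (m - 1)" for f
  proof -
    have "(\<Sum>i<m. coeff ((G * f) mod xn_minus m 1) i * coeff w i) =
        coeff (((G * f) mod xn_minus m 1 * rev_coeffs m w) mod xn_minus m 1) (m - 1)"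
      using m by (intro sum_coeff_mult_eq_coeff_mod degree_mod_xn_minus)
    also have "((G * f) mod xn_minus m 1 * rev_coeffs m w) mod xn_minus m 1 =
        ((G * f) * rev_coeffs m w) mod xn_minus m 1"
      by (rule mod_mult_left_eq)
    also have "(G * f) * rev_coeffs m w = f * (G * rev_coeffs m w)"
      by (simp add: ac_simps)
    finally show ?thesis .
  qed
  then show ?thesis
    using xn_minus_dvd_if_coeff_mod_eq_0[OF m, of "G * rev_coeffs m w"]
    by (auto simp: dvd_eq_mod_eq_0[symmetric] dvd_mult)
qed

lemma reflect_poly_dvd_imp_dvd_rev_coeffs:
  fixes H w :: "'a::field poly"
  assumes dw: "degree w < m" and H0: "coeff H 0 \<noteq> 0" and Hw: "reflect_poly H dvd w"
  shows "H dvd rev_coeffs m w"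
proof (cases "w = 0")
  case False
  obtain q where "w = reflect_poly H * q"
    using Hw by blast
  then have "reflect_poly w = H * reflect_poly q"
    using H0 by (simp add: reflect_poly_mult)
  then show ?thesis
    using rev_coeffs_eq_reflect_poly[OF dw] by simp
qed (simp add: rev_coeffs_def)

lemma xn_minus_dvd_mult_rev_coeffs_iff:
  fixes G H w :: "'a::field poly"
  assumes m: "m > 0" and GH: "G * H = xn_minus m 1" and dw: "degree w < m"
    and H0: "coeff H 0 \<noteq> 0"
  shows "xn_minus m 1 dvd G * rev_coeffs m w \<longleftrightarrow> reflect_poly H dvd w"
proof -
  have "G \<noteq> 0"
    using GH xn_minus_neq_0[OF m, of 1] by auto
  then have "xn_minus m 1 dvd G * rev_coeffs m w \<longleftrightarrow> H dvd rev_coeffs m w"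
    by (simp flip: GH)
  also have "\<dots> \<longleftrightarrow> reflect_poly H dvd w"
  proof
    assume "H dvd rev_coeffs m w"
    then have "reflect_poly (reflect_poly H) dvd rev_coeffs m w"
      using H0 by simp
    moreover have "coeff (reflect_poly H) 0 \<noteq> 0"
      using H0 by auto
    ultimately have "reflect_poly H dvd rev_coeffs m (rev_coeffs m w)"
      by (intro reflect_poly_dvd_imp_dvd_rev_coeffs[OF degree_rev_coeffs_less[OF m]])
    then show "reflect_poly H dvd w"
      using rev_coeffs_rev_coeffs[OF dw] by simp
  qed (rule reflect_poly_dvd_imp_dvd_rev_coeffs[OF dw H0])
  finally show ?thesis .
qed

lemma Fwords_eq_coeffs:
  assumes m: "m > 0"
  shows "Fwords m = {coeff w | w :: 'a::comm_monoid_add poly. degree w < m}"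
proof (intro equalityI subsetI)
  fix d :: "nat \<Rightarrow> 'a"
  assume d: "d \<in> Fwords m"
  define w where "w = (\<Sum>i<m. monom (d i) i)"
  have "coeff w = d"
    using d by (auto simp: w_def coeff_sum coeff_monom Fwords_def)
  moreover have "degree w < m"
    using m by (intro degree_lessI) (auto simp: w_def coeff_sum coeff_monom)
  ultimately show "d \<in> {coeff w | w. degree w < m}"
    by blast
qed (auto simp: Fwords_def coeff_eq_0)

lemma coeff_in_Fdual_cyc_code_iff:
  fixes G H w :: "'a::field poly"
  assumes m: "m > 0" and GH: "G * H = xn_minus m 1" and dw: "degree w < m"
    and H0: "coeff H 0 \<noteq> 0"
  shows "coeff w \<in> Fdual m (cyc_code m G) \<longleftrightarrow> reflect_poly H dvd w"
proof -
  have "coeff w \<in> Fdual m (cyc_code m G) \<longleftrightarrow>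
      (\<forall>f. (\<Sum>i<m. coeff ((G * f) mod xn_minus m 1) i * coeff w i) = 0)"
    using dw by (auto simp: Fdual_def Fwords_def cyc_code_def xn_minus_1 coeff_eq_0)
  also have "\<dots> \<longleftrightarrow> reflect_poly H dvd w"
    by (simp add: orthogonal_cyc_code_iff[OF m] xn_minus_dvd_mult_rev_coeffs_iff[OF m GH dw H0])
  finally show ?thesis .
qed

lemma Fdual_cyc_code:
  fixes G H :: "'a::field poly"
  assumes m: "m > 0" and GH: "G * H = monom 1 m - 1"
  shows "Fdual m (cyc_code m G) = cyc_code m (recip H)"
proof -
  have GH': "G * H = xn_minus m 1"
    using GH by (simp add: xn_minus_1)
  have H0: "coeff H 0 \<noteq> 0"
    using arg_cong[OF GH', of "\<lambda>p. coeff p 0"] m by (auto simp: coeff_mult_0 coeff_xn_minus)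
  note mem_iff = coeff_in_Fdual_cyc_code_iff[OF m GH' _ H0]
  have recip_dvd_iff: "recip H dvd p \<longleftrightarrow> reflect_poly H dvd p" for p
    using H0 by (simp add: recip_def smult_dvd_iff)
  have "reflect_poly G * reflect_poly H = - xn_minus m 1"
    unfolding reflect_poly_mult[symmetric] GH' using m
    by (intro poly_eqI) (auto simp: coeff_reflect_poly degree_xn_minus coeff_xn_minus)
  then have "recip H dvd monom 1 m - 1"
    by (metis recip_dvd_iff xn_minus_1 dvd_minus_iff dvd_triv_right)
  then have cyc: "cyc_code m (recip H) = {coeff w | w. degree w < m \<and> reflect_poly H dvd w}"
    by (simp add: cyc_code_eq_multiples[OF m] recip_dvd_iff)
  show ?thesis
    unfolding cyc
  proof (intro equalityI subsetI)
    fix d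
    assume d: "d \<in> Fdual m (cyc_code m G)"
    then obtain w where "d = coeff w" "degree w < m"
      using Fwords_eq_coeffs[OF m] by (auto simp: Fdual_def)
    then show "d \<in> {coeff w | w. degree w < m \<and> reflect_poly H dvd w}"
      using d mem_iff by blast
  next
    fix d
    assume "d \<in> {coeff w | w. degree w < m \<and> reflect_poly H dvd w}"
    then obtain w where "d = coeff w" "degree w < m" "reflect_poly H dvd w"
      by blast
    then show "d \<in> Fdual m (cyc_code m G)"
      using mem_iff by blast
  qed
qed

lemma recip_mult: "recip (h1 * h2) = recip h1 * recip (h2 :: 'a::field poly)"
  by (simp add: recip_def coeff_mult_0 reflect_poly_mult mult_smult_left mult_smult_right
      mult.commute)

theorem theorem3p17:
  fixes p n :: nat and lam mu :: "'a::{finite, field}"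
    and C :: "(nat \<Rightarrow> 'a \<times> 'a) set"
    and g1 g2 h1 h2 :: "'a poly"
  assumes "prime p" and "odd p" and "card (UNIV :: 'a set) = p"
    and "n > 0"
    and theta: "(lam = 1 \<and> mu = -2) \<or> (lam = -1 \<and> mu = 2)"
    and cc: "is_constacyclic (lam, mu) n C"
    and gen: "C = gen_code (lam, mu) n
               {polyword (lam, mu) n (0, g1), polyword (lam, mu) n (g2, - g2)}"
    and g1_form: "g1 = 0 \<or> lead_coeff g1 = 1" and g2_form: "g2 = 0 \<or> lead_coeff g2 = 1"
    and g1_dvd: "g1 \<noteq> 0 \<longrightarrow> g1 dvd monom 1 n - [:lam + mu:]"
    and g2_dvd: "g2 \<noteq> 0 \<longrightarrow> g2 dvd monom 1 n - [:lam:]"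
    and h1: "g1 * h1 = monom 1 n - [:lam + mu:]"
    and h2: "g2 * h2 = monom 1 n - [:lam:]"
  shows "gray lam mu n ` Rdual n C = cyc_code (2 * n) (recip h1 * recip h2) \<and>
         gray lam mu n ` Rdual n C = Fdual (2 * n) (gray lam mu n ` C)"
proof -
  have two: "(2::'a) \<noteq> 0"
    using \<open>odd p\<close> \<open>card (UNIV :: 'a set) = p\<close> by (intro two_neq_0_if_odd_card) simp
  have hl: "lam * lam = 1" and hs: "mu = -2 * lam"
    using theta by auto
  have h1': "g1 * h1 = xn_minus n (lam + mu)" and h2': "g2 * h2 = xn_minus n lam"
    using h1 h2 by (simp_all add: xn_minus_def)
  have dual: "gray lam mu n ` Rdual n C = Fdual (2 * n) (gray lam mu n ` C)"
    using is_constacyclicD(3)[OF cc] by (rule gray_Rdual_eq_Fdual[OF hl hs two])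
  have "g1 dvd xn_minus n (lam + mu)" "g2 dvd xn_minus n lam"
    by (simp_all flip: h1' h2')
  then have image: "gray lam mu n ` C = cyc_code (2 * n) (g1 * g2)"
    unfolding constacyclic_code_eq_crt_words[OF \<open>n > 0\<close> cc gen]
    by (intro gray_crt_words_eq_cyc_code[OF \<open>n > 0\<close> hl hs two])
  have "(g1 * g2) * (h1 * h2) = (g1 * h1) * (g2 * h2)"
    by (simp add: ac_simps)
  also have "\<dots> = monom 1 (2 * n) - 1"
    using hs xn_minus_mult_xn_minus_uminus[OF hl, of n] by (simp add: h1' h2')
  finally have "Fdual (2 * n) (cyc_code (2 * n) (g1 * g2)) = cyc_code (2 * n) (recip (h1 * h2))"
    using \<open>n > 0\<close> by (intro Fdual_cyc_code) simp_all
  then show ?thesis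
    using dual image by (simp add: recip_mult)
qed

end
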